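(* Let $\mathcal{S}$ be a set, $\mathcal{A}$ a finite set and $\boldsymbol\varphi:\mathcal{S}\times\mathcal{A}\to\mathbb{R}^d$ with $\|\boldsymbol\varphi(s,a)\|_2\le1$ for all $(s,a)$. Fix constants $L,B,D,M>0$ and $\lambda>0$. Let $\mathcal{Q}$ be the class of functions $\mathcal{S}\times\mathcal{A}\to\mathbb{R}$ of the form $$Q(\cdot,\cdot)=\Big(\mathbf w^\top\boldsymbol\varphi(\cdot,\cdot)+v+\beta\sqrt{\boldsymbol\varphi(\cdot,\cdot)^\top\Lambda^{-1}\boldsymbol\varphi(\cdot,\cdot)}\Big)\wedge M$$ with $\|\mathbf w\|_2\le L$, $\beta\in[0,B]$, $v\in[0,D]$, and $\Lambda$ a positive definite matrix with $\lambda_{\min}(\Lambda)\ge\lambda$. Let $$\mathcal{V}=\Big\{\max_aQ(\cdot,a):\ Q(\cdot,\cdot)=\textsc{Clip}\big(Q_1(\cdot,\cdot);\,Q_2(\cdot,\cdot)\vee Q_3(\cdot,\cdot),\,Q_4(\cdot,\cdot)\wedge Q_5(\cdot,\cdot)\big),\ Q_1,\dots,Q_5\in\mathcal{Q}\Big\}.$$ Then for every $\varepsilon>0$, $$\log\mathcal{N}_\varepsilon(\mathcal{V},\|\cdot\|_\infty)\le5d\log(1+8L/\varepsilon)+5\log(1+8D/\varepsilon)+5d^2\log\big[1+8d^{1/2}B^2/(\lambda\varepsilon^2)\big].$$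
   Context: $a\vee b=\max\{a,b\}$, $a\wedge b=\min\{a,b\}$ (applied pointwise to functions), $\textsc{Clip}(x;L,U)=(x\vee L)\wedge U$. $\mathcal{N}_\varepsilon(\mathcal{F},\|\cdot\|_\infty)$ denotes the $\varepsilon$-covering number of the function class $\mathcal{F}$ with respect to the distance $\sup_x|f(x)-g(x)|$. *)

theory Defs
  imports "HOL-Analysis.Analysis"
begin

definition clip :: "real \<Rightarrow> real \<Rightarrow> real \<Rightarrow> real" where
  "clip x lo up = min (max x lo) up"

text \<open>epsilon-covering number w.r.t. the sup distance; infinity if no finite cover exists.
  Centres are arbitrary real-valued functions on the domain.\<close>
definition covering_number :: "real \<Rightarrow> ('s \<Rightarrow> real) set \<Rightarrow> enat" where
  "covering_number eps F =
     Inf {enat (card C) | C. finite C \<and>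
            (\<forall>f\<in>F. \<exists>g\<in>C. (SUP x. \<bar>f x - g x\<bar>) \<le> eps \<and> bdd_above (range (\<lambda>x. \<bar>f x - g x\<bar>)))}"

definition pos_def_mat :: "real^'d^'d \<Rightarrow> bool" where
  "pos_def_mat Lam \<longleftrightarrow> transpose Lam = Lam \<and> (\<forall>x. x \<noteq> 0 \<longrightarrow> x \<bullet> (Lam *v x) > 0)"

definition min_eig_ge :: "real^'d^'d \<Rightarrow> real \<Rightarrow> bool" where
  "min_eig_ge Lam lam \<longleftrightarrow> (\<forall>\<mu> v. v \<noteq> 0 \<and> Lam *v v = \<mu> *\<^sub>R v \<longrightarrow> lam \<le> \<mu>)"

definition Qclass :: "('s \<Rightarrow> 'b \<Rightarrow> real^'d) \<Rightarrow> real \<Rightarrow> real \<Rightarrow> real \<Rightarrow> real \<Rightarrow> real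
                       \<Rightarrow> ('s \<Rightarrow> 'b \<Rightarrow> real) set" where
  "Qclass \<phi> L B D M lam =
     {(\<lambda>s a. min (w \<bullet> \<phi> s a + v + \<beta> * sqrt (\<phi> s a \<bullet> (matrix_inv Lam *v \<phi> s a))) M)
      | w v \<beta> Lam. norm w \<le> L \<and> 0 \<le> \<beta> \<and> \<beta> \<le> B \<and> 0 \<le> v \<and> v \<le> D \<and>
                   pos_def_mat Lam \<and> min_eig_ge Lam lam}"

definition Vclass :: "'b set \<Rightarrow> ('s \<Rightarrow> 'b \<Rightarrow> real^'d) \<Rightarrow> real \<Rightarrow> real \<Rightarrow> real \<Rightarrow> real \<Rightarrow> real
                       \<Rightarrow> ('s \<Rightarrow> real) set" where
  "Vclass A \<phi> L B D M lam =
     {(\<lambda>s. Max ((\<lambda>a. clip (Q1 s a) (max (Q2 s a) (Q3 s a)) (min (Q4 s a) (Q5 s a))) ` A))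
      | Q1 Q2 Q3 Q4 Q5. Q1 \<in> Qclass \<phi> L B D M lam \<and> Q2 \<in> Qclass \<phi> L B D M lam \<and>
          Q3 \<in> Qclass \<phi> L B D M lam \<and> Q4 \<in> Qclass \<phi> L B D M lam \<and> Q5 \<in> Qclass \<phi> L B D M lam}"

end

theory Submission
  imports Defs
begin

(* Every Q in the class is a function Qparam of parameters (w, v, P), where P = beta^2 Lam^-1
   replaces the bonus term, and |Delta Q| <= |Delta w| + |Delta v| + sqrt |Delta P| uniformly
   when |phi| <= 1.  Since lambda_min(Lam) >= lam, every row of Lam^-1 has norm at most 1/lam,
   so P ranges over the Frobenius ball of radius sqrt d B^2/lam.  Volumetric eps/4-, eps/4- and
   eps^2/4-nets of the three parameter balls, of sizes (1 + 8L/eps)^d, 1 + 8D/eps and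
   (1 + 8 sqrt d B^2/(lam eps^2))^(d^2), therefore give a uniform eps-cover of the class.
   Clip, max, min and the maximum over actions are 1-Lipschitz for the sup distance, so the
   fivefold products of this cover form an eps-cover of V, which accounts for the factor 5. *)

section \<open>Quadratic forms of matrices with spectrum bounded below\<close>

lemma quadratic_nonneg_imp_linear_coeff_zero:
  fixes c k :: real
  assumes nonneg: "\<And>t. 0 \<le> 2 * t * c + t\<^sup>2 * k"
  shows "c = 0"
proof (rule ccontr)
  assume "c \<noteq> 0"
  have "0 \<le> k" using nonneg[of 1] nonneg[of "-1"] by simp
  then have k1: "k + 1 > 0" by simp
  define t where "t = - c / (k + 1)"
  have tk: "t * k = - c - t"
    using k1 unfolding t_def by (simp add: field_simps)
  have "t * c = - c\<^sup>2 / (k + 1)" by (simp add: t_def power2_eq_square)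
  also have "\<dots> < 0" using \<open>c \<noteq> 0\<close> k1 by (simp add: divide_neg_pos)
  finally have "t * c < 0" .
  have "2 * t * c + t\<^sup>2 * k = 2 * t * c + t * (t * k)" by (simp add: power2_eq_square)
  also have "\<dots> = t * c - t\<^sup>2" unfolding tk by (simp add: power2_eq_square algebra_simps)
  also have "\<dots> < 0" using \<open>t * c < 0\<close> by (smt (verit) zero_le_power2)
  finally show False using nonneg[of t] by simp
qed

lemma symmetric_matrix_quadratic_form_minimiser_eigenvector:
  fixes Lam :: "real^'n^'n"
  assumes sym: "transpose Lam = Lam"
    and lower: "\<And>y. \<mu> * (norm y)\<^sup>2 \<le> y \<bullet> (Lam *v y)"
    and attained: "x \<bullet> (Lam *v x) = \<mu> * (norm x)\<^sup>2"
  shows "Lam *v x = \<mu> *\<^sub>R x"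
proof -
  define r where "r = Lam *v x - \<mu> *\<^sub>R x"
  have "x \<bullet> (Lam *v r) = r \<bullet> (Lam *v x)"
    by (metis dot_lmul_matrix inner_commute sym vector_transpose_matrix)
  moreover have "r \<bullet> (Lam *v x) = r \<bullet> r + \<mu> * (r \<bullet> x)"
    by (simp add: r_def inner_commute algebra_simps)
  ultimately have cross: "x \<bullet> (Lam *v r) + r \<bullet> (Lam *v x) = 2 * (r \<bullet> r) + 2 * \<mu> * (r \<bullet> x)"
    by simp
  have "(x + t *\<^sub>R r) \<bullet> (Lam *v (x + t *\<^sub>R r))
      = x \<bullet> (Lam *v x) + t * (x \<bullet> (Lam *v r) + r \<bullet> (Lam *v x)) + t\<^sup>2 * (r \<bullet> (Lam *v r))" for t
    by (simp add: power2_eq_square algebra_simps)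
  moreover have "(norm (x + t *\<^sub>R r))\<^sup>2 = (norm x)\<^sup>2 + 2 * t * (r \<bullet> x) + t\<^sup>2 * (norm r)\<^sup>2" for t
    unfolding power2_norm_eq_inner
    by (simp add: inner_commute power2_eq_square algebra_simps)
  ultimately have expand: "(x + t *\<^sub>R r) \<bullet> (Lam *v (x + t *\<^sub>R r)) - \<mu> * (norm (x + t *\<^sub>R r))\<^sup>2
      = 2 * t * (r \<bullet> r) + t\<^sup>2 * (r \<bullet> (Lam *v r) - \<mu> * (norm r)\<^sup>2)" for t
    unfolding cross attained by (simp add: algebra_simps)
  have "0 \<le> 2 * t * (r \<bullet> r) + t\<^sup>2 * (r \<bullet> (Lam *v r) - \<mu> * (norm r)\<^sup>2)" for t
    using lower[of "x + t *\<^sub>R r"] expand[of t] by linarith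
  then have "r \<bullet> r = 0" by (rule quadratic_nonneg_imp_linear_coeff_zero)
  then show ?thesis by (simp add: r_def)
qed

lemma quadratic_form_ge_min_eig:
  fixes Lam :: "real^'n^'n"
  assumes sym: "transpose Lam = Lam" and eig: "min_eig_ge Lam lam"
  shows "lam * (norm x)\<^sup>2 \<le> x \<bullet> (Lam *v x)"
proof -
  define q where "q = (\<lambda>y::real^'n. y \<bullet> (Lam *v y))"
  have "continuous_on (sphere 0 1) q"
    unfolding q_def
    by (intro continuous_intros linear_continuous_on matrix_vector_mul_linear bounded_linear_inner_right)
  then obtain x0 where x0: "norm x0 = 1" and min: "\<And>y. norm y = 1 \<Longrightarrow> q x0 \<le> q y"
    using continuous_attains_inf[OF compact_sphere, of 0 1 q] by auto
  have lower: "q x0 * (norm y)\<^sup>2 \<le> q y" for y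
  proof (cases "y = 0")
    case False
    then have "q y = (norm y)\<^sup>2 * q (y /\<^sub>R norm y)"
      by (simp add: q_def matrix_vector_mult_scaleR power2_eq_square field_simps)
    moreover have "q x0 \<le> q (y /\<^sub>R norm y)" using False by (intro min) simp
    ultimately show ?thesis by (metis mult.commute mult_left_mono zero_le_power2)
  qed (simp add: q_def)
  have "Lam *v x0 = q x0 *\<^sub>R x0"
    using lower x0 by (intro symmetric_matrix_quadratic_form_minimiser_eigenvector[OF sym]) (auto simp: q_def)
  moreover have "x0 \<noteq> 0" using x0 by auto
  ultimately have "lam \<le> q x0" using eig unfolding min_eig_ge_def by blast
  then show ?thesis using lower[of x] unfolding q_def by (meson order_trans mult_right_mono zero_le_power2)
qed

lemma min_eig_ge_pos_invertible:
  fixes Lam :: "real^'n^'n"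
  assumes "min_eig_ge Lam lam" and "0 < lam"
  shows "invertible Lam"
proof -
  have "x = 0" if "Lam *v x = 0" for x
    using assms that unfolding min_eig_ge_def by (metis not_le scaleR_zero_left)
  then show ?thesis using matrix_left_invertible_ker invertible_left_inverse by blast
qed

lemma matrix_inv_mult_right:
  fixes A :: "real^'n^'n"
  assumes "invertible A"
  shows "A *v (matrix_inv A *v y) = y"
proof -
  have "A ** matrix_inv A = mat 1"
    using assms unfolding invertible_def matrix_inv_def by (rule someI_ex[THEN conjunct1])
  then show ?thesis by (simp add: matrix_vector_mul_assoc)
qed

lemma norm_matrix_inv_mult_le:
  fixes Lam :: "real^'n^'n"
  assumes sym: "transpose Lam = Lam" and eig: "min_eig_ge Lam lam" and pos: "0 < lam"
  shows "norm (matrix_inv Lam *v y) \<le> norm y / lam"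
proof -
  define x where "x = matrix_inv Lam *v y"
  have "lam * (norm x)\<^sup>2 \<le> x \<bullet> (Lam *v x)" by (rule quadratic_form_ge_min_eig[OF sym eig])
  also have "\<dots> = x \<bullet> y"
    using matrix_inv_mult_right[OF min_eig_ge_pos_invertible[OF eig pos]] by (simp add: x_def)
  also have "\<dots> \<le> norm x * norm y" by (rule norm_cauchy_schwarz)
  finally have "norm x * (lam * norm x) \<le> norm x * norm y" by (simp add: power2_eq_square ac_simps)
  then have "lam * norm x \<le> norm y" using mult_le_cancel_left_pos[of "norm x"] by (cases "x = 0") auto
  then show ?thesis using pos by (simp add: x_def field_simps)
qed

lemma quadratic_form_matrix_inv_nonneg:
  fixes Lam :: "real^'n^'n"
  assumes sym: "transpose Lam = Lam" and eig: "min_eig_ge Lam lam" and pos: "0 < lam"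
  shows "0 \<le> y \<bullet> (matrix_inv Lam *v y)"
proof -
  define x where "x = matrix_inv Lam *v y"
  have "0 \<le> lam * (norm x)\<^sup>2" using pos by simp
  also have "\<dots> \<le> x \<bullet> (Lam *v x)" by (rule quadratic_form_ge_min_eig[OF sym eig])
  also have "\<dots> = y \<bullet> x"
    using matrix_inv_mult_right[OF min_eig_ge_pos_invertible[OF eig pos]] by (simp add: x_def inner_commute)
  finally show ?thesis by (simp add: x_def)
qed

lemma norm_matrix_vector_mult_le:
  fixes M :: "real^'n^'m"
  shows "norm (M *v x) \<le> norm M * norm x"
proof -
  have "(M *v x) $ i = M $ i \<bullet> x" for i
    by (simp add: matrix_vector_mult_def inner_vec_def)
  then have "\<bar>(M *v x) $ i\<bar> \<le> norm (M $ i) * norm x" for i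
    by (simp add: Cauchy_Schwarz_ineq2)
  then have "sqrt (\<Sum>i\<in>UNIV. ((M *v x) $ i)\<^sup>2) \<le> sqrt (\<Sum>i\<in>UNIV. (norm (M $ i) * norm x)\<^sup>2)"
    by (intro real_sqrt_le_mono sum_mono) (metis abs_ge_zero power2_abs power_mono)
  also have "\<dots> = sqrt ((\<Sum>i\<in>UNIV. (norm (M $ i))\<^sup>2) * (norm x)\<^sup>2)"
    by (simp add: power_mult_distrib sum_distrib_right)
  finally show ?thesis
    by (simp add: real_sqrt_mult norm_vec_def[of M] norm_vec_def[of "M *v x"] L2_set_def)
qed

lemma norm_matrix_le_sqrt_card_mult:
  fixes M :: "real^'n^'m"
  assumes "0 \<le> c" and bound: "\<And>z. norm (M *v z) \<le> c * norm z"
  shows "norm M \<le> sqrt (real CARD('m)) * c"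
proof -
  have row: "norm (M $ i) \<le> c" for i
  proof -
    have "(norm (M $ i))\<^sup>2 = (M *v (M $ i)) $ i"
      by (simp add: matrix_vector_mult_def inner_vec_def power2_norm_eq_inner)
    also have "\<dots> \<le> norm (M *v (M $ i))"
      by (meson abs_ge_self component_le_norm_cart order_trans)
    also have "\<dots> \<le> c * norm (M $ i)" by (rule bound)
    finally show ?thesis using \<open>0 \<le> c\<close> by (cases "M $ i = 0") (auto simp: power2_eq_square)
  qed
  have "norm M = sqrt (\<Sum>i\<in>UNIV. (norm (M $ i))\<^sup>2)" by (simp add: norm_vec_def L2_set_def)
  also have "\<dots> \<le> sqrt (\<Sum>i\<in>(UNIV::'m set). c\<^sup>2)"
    using row by (intro real_sqrt_le_mono sum_mono power_mono) auto
  also have "\<dots> = sqrt (real CARD('m)) * c" using \<open>0 \<le> c\<close> by (simp add: real_sqrt_mult)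
  finally show ?thesis .
qed

lemma norm_matrix_inv_le:
  fixes Lam :: "real^'n^'n"
  assumes "transpose Lam = Lam" and "min_eig_ge Lam lam" and "0 < lam"
  shows "norm (matrix_inv Lam) \<le> sqrt (real CARD('n)) / lam"
  using norm_matrix_le_sqrt_card_mult[of "1 / lam" "matrix_inv Lam"]
    norm_matrix_inv_mult_le[OF assms] assms(3) by simp

section \<open>Nets of Euclidean balls\<close>

lemma card_separated_subset_cball_le:
  fixes S :: "'a::euclidean_space set"
  assumes "finite S" and S: "S \<subseteq> cball 0 R" and "0 \<le> R" and "0 < \<delta>"
    and sep: "\<And>x y. x \<in> S \<Longrightarrow> y \<in> S \<Longrightarrow> x \<noteq> y \<Longrightarrow> \<delta> < dist x y"
  shows "real (card S) \<le> (1 + 2 * R / \<delta>) ^ DIM('a)"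
proof -
  define r where "r = \<delta> / 2"
  have "0 < r" using \<open>0 < \<delta>\<close> by (simp add: r_def)
  define U where "U = unit_ball_vol (real DIM('a))"
  have "0 < U" by (simp add: U_def)
  have "disjoint_family_on (\<lambda>x. ball x r) S"
    unfolding disjoint_family_on_def
  proof (intro ballI impI)
    fix x y assume "x \<in> S" "y \<in> S" "x \<noteq> y"
    then have "2 * r < dist x y" using sep by (simp add: r_def)
    then have "\<not> (dist x z < r \<and> dist y z < r)" for z
      using dist_triangle[of x y z] dist_commute[of z y] by linarith
    then show "ball x r \<inter> ball y r = {}" by auto
  qed
  then have "measure lborel (\<Union>x\<in>S. ball x r) = real (card S) * (U * r ^ DIM('a))"
    using \<open>finite S\<close> \<open>0 < r\<close> emeasure_lborel_ball_finite
    by (subst measure_finite_Union) (auto simp: less_top[symmetric] content_ball U_def)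
  moreover have "(\<Union>x\<in>S. ball x r) \<subseteq> ball 0 (R + r)"
  proof
    fix z assume "z \<in> (\<Union>x\<in>S. ball x r)"
    then obtain x where "x \<in> S" and "dist x z < r" by auto
    moreover have "dist 0 x \<le> R" using S \<open>x \<in> S\<close> by auto
    ultimately show "z \<in> ball 0 (R + r)" using dist_triangle[of 0 z x] by simp
  qed
  then have "measure lborel (\<Union>x\<in>S. ball x r) \<le> measure lborel (ball (0::'a) (R + r))"
    using emeasure_lborel_ball_finite
    by (intro measure_mono_fmeasurable fmeasurableI) (auto intro!: borel_open)
  moreover have "measure lborel (ball (0::'a) (R + r)) = U * (R + r) ^ DIM('a)"
    using \<open>0 < r\<close> \<open>0 \<le> R\<close> by (simp add: content_ball U_def)
  ultimately have "real (card S) * r ^ DIM('a) \<le> (R + r) ^ DIM('a)"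
    using \<open>0 < U\<close> by (simp add: mult.left_commute)
  then have "real (card S) \<le> ((R + r) / r) ^ DIM('a)"
    using \<open>0 < r\<close> by (simp add: field_simps)
  also have "(R + r) / r = 1 + 2 * R / \<delta>" using \<open>0 < r\<close> by (simp add: r_def field_simps)
  finally show ?thesis .
qed

(* A maximal delta-separated subset of the ball is a delta-net of it. *)

lemma cball_finite_net:
  fixes R \<delta> :: real
  assumes "0 \<le> R" and "0 < \<delta>"
  obtains C :: "'a::euclidean_space set"
  where "finite C" and "real (card C) \<le> (1 + 2 * R / \<delta>) ^ DIM('a)"
    and "\<And>x. x \<in> cball 0 R \<Longrightarrow> \<exists>c\<in>C. dist x c \<le> \<delta>"
proof -
  define P where "P = (\<lambda>S::'a set. finite S \<and> S \<subseteq> cball 0 R \<and>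
       (\<forall>x\<in>S. \<forall>y\<in>S. x \<noteq> y \<longrightarrow> \<delta> < dist x y))"
  have card_P: "real (card S) \<le> (1 + 2 * R / \<delta>) ^ DIM('a)" if "P S" for S
    using that assms card_separated_subset_cball_le[of S R \<delta>] unfolding P_def by blast
  then have "card S < Suc (nat \<lceil>(1 + 2 * R / \<delta>) ^ DIM('a)\<rceil>)" if "P S" for S
    using that real_nat_ceiling_ge by (metis le_imp_less_Suc of_nat_le_iff order_trans)
  moreover have "P {}" by (simp add: P_def)
  ultimately obtain S where "P S" and max: "\<And>T. P T \<Longrightarrow> card T \<le> card S"
    using ex_has_greatest_nat[of P "{}" card] by blast
  have "\<exists>c\<in>S. dist x c \<le> \<delta>" if "x \<in> cball 0 R" for x
  proof (rule ccontr)
    assume "\<not> ?thesis"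
    then have far: "\<forall>c\<in>S. \<delta> < dist x c" by force
    then have "x \<notin> S" using \<open>0 < \<delta>\<close> by force
    have "P (insert x S)"
      using \<open>P S\<close> that far unfolding P_def by (auto simp: dist_commute)
    then show False using max[of "insert x S"] \<open>x \<notin> S\<close> \<open>P S\<close> by (simp add: P_def)
  qed
  then show ?thesis using that \<open>P S\<close> card_P unfolding P_def by blast
qed

section \<open>Lipschitz estimates\<close>

lemma abs_max_diff_le: "\<bar>a - c\<bar> \<le> e \<Longrightarrow> \<bar>b - d\<bar> \<le> e \<Longrightarrow> \<bar>max a b - max c d\<bar> \<le> (e::real)"
  by (auto simp: max_def abs_le_iff)

lemma abs_min_diff_le: "\<bar>a - c\<bar> \<le> e \<Longrightarrow> \<bar>b - d\<bar> \<le> e \<Longrightarrow> \<bar>min a b - min c d\<bar> \<le> (e::real)"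
  by (auto simp: min_def abs_le_iff)

lemma abs_clip_diff_le:
  "\<bar>x - x'\<bar> \<le> e \<Longrightarrow> \<bar>lo - lo'\<bar> \<le> e \<Longrightarrow> \<bar>up - up'\<bar> \<le> e \<Longrightarrow> \<bar>clip x lo up - clip x' lo' up'\<bar> \<le> e"
  unfolding clip_def by (intro abs_min_diff_le abs_max_diff_le)

lemma abs_Max_image_diff_le:
  fixes F G :: "'a \<Rightarrow> real"
  assumes "finite A" and "A \<noteq> {}" and close: "\<And>a. a \<in> A \<Longrightarrow> \<bar>F a - G a\<bar> \<le> e"
  shows "\<bar>Max (F ` A) - Max (G ` A)\<bar> \<le> e"
proof -
  have "Max (F ` A) \<in> F ` A" and "Max (G ` A) \<in> G ` A"
    using assms(1,2) by (intro Max_in; simp)+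
  then obtain a b where "a \<in> A" and a: "Max (F ` A) = F a" and "b \<in> A" and b: "Max (G ` A) = G b"
    by auto
  have "G a \<le> Max (G ` A)" and "F b \<le> Max (F ` A)"
    using \<open>a \<in> A\<close> \<open>b \<in> A\<close> \<open>finite A\<close> by auto
  then show ?thesis using close[OF \<open>a \<in> A\<close>] close[OF \<open>b \<in> A\<close>] a b by linarith
qed

lemma sqrt_diff_le_sqrt_diff:
  fixes a b :: real
  assumes "0 \<le> b" and "b \<le> a"
  shows "sqrt a - sqrt b \<le> sqrt (a - b)"
proof -
  have "a \<le> (sqrt b + sqrt (a - b))\<^sup>2"
    using assms by (simp add: power2_sum)
  then have "sqrt a \<le> sqrt b + sqrt (a - b)" using assms by (intro real_le_lsqrt) auto
  then show ?thesis by simp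
qed

lemma abs_sqrt_diff_le:
  fixes a b :: real
  assumes "0 \<le> a" and "0 \<le> b"
  shows "\<bar>sqrt a - sqrt b\<bar> \<le> sqrt \<bar>a - b\<bar>"
  using assms sqrt_diff_le_sqrt_diff[of a b] sqrt_diff_le_sqrt_diff[of b a]
  by (cases "b \<le> a") (auto simp: abs_minus_commute)

(* sqrt (max 0 _) rather than sqrt: the net points P need not be positive semidefinite, and
   HOL's sqrt is odd on negative arguments. *)
definition Qparam ::
    "('s \<Rightarrow> 'b \<Rightarrow> real^'d) \<Rightarrow> real \<Rightarrow> real^'d \<Rightarrow> real \<Rightarrow> real^'d^'d \<Rightarrow> 's \<Rightarrow> 'b \<Rightarrow> real"
  where "Qparam \<phi> M w v P s a = min (w \<bullet> \<phi> s a + v + sqrt (max 0 (\<phi> s a \<bullet> (P *v \<phi> s a)))) M"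

lemma Qclass_subset_Qparam:
  fixes \<phi> :: "'s \<Rightarrow> 'b \<Rightarrow> real^'d"
  assumes "0 < lam"
  shows "Qclass \<phi> L B D M lam \<subseteq> (\<lambda>(w, v, P). Qparam \<phi> M w v P) `
           (cball 0 L \<times> cball 0 D \<times> cball 0 (sqrt (real CARD('d)) * B\<^sup>2 / lam))"
proof
  fix Q assume "Q \<in> Qclass \<phi> L B D M lam"
  then obtain w v \<beta> Lam
    where Q: "Q = (\<lambda>s a. min (w \<bullet> \<phi> s a + v + \<beta> * sqrt (\<phi> s a \<bullet> (matrix_inv Lam *v \<phi> s a))) M)"
      and "norm w \<le> L" and "0 \<le> \<beta>" "\<beta> \<le> B" and "0 \<le> v" "v \<le> D"
      and sym: "transpose Lam = Lam" and eig: "min_eig_ge Lam lam"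
    unfolding Qclass_def pos_def_mat_def by blast
  define P where "P = \<beta>\<^sup>2 *\<^sub>R matrix_inv Lam"
  have "norm P = \<beta>\<^sup>2 * norm (matrix_inv Lam)" by (simp add: P_def)
  also have "\<dots> \<le> B\<^sup>2 * (sqrt (real CARD('d)) / lam)"
    using norm_matrix_inv_le[OF sym eig \<open>0 < lam\<close>] \<open>0 \<le> \<beta>\<close> \<open>\<beta> \<le> B\<close>
    by (intro mult_mono power_mono) auto
  finally have "norm P \<le> sqrt (real CARD('d)) * B\<^sup>2 / lam" by (simp add: ac_simps)
  moreover have "\<beta> * sqrt (x \<bullet> (matrix_inv Lam *v x)) = sqrt (max 0 (x \<bullet> (P *v x)))" for x
  proof -
    have "x \<bullet> (P *v x) = \<beta>\<^sup>2 * (x \<bullet> (matrix_inv Lam *v x))"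
      by (simp add: P_def scaleR_matrix_vector_assoc[symmetric])
    then show ?thesis
      using quadratic_form_matrix_inv_nonneg[OF sym eig \<open>0 < lam\<close>, of x] \<open>0 \<le> \<beta>\<close>
      by (simp add: real_sqrt_mult)
  qed
  then have "Q = Qparam \<phi> M w v P" unfolding Q by (intro ext) (simp add: Qparam_def)
  ultimately show "Q \<in> (\<lambda>(w, v, P). Qparam \<phi> M w v P) `
           (cball 0 L \<times> cball 0 D \<times> cball 0 (sqrt (real CARD('d)) * B\<^sup>2 / lam))"
    using \<open>norm w \<le> L\<close> \<open>0 \<le> v\<close> \<open>v \<le> D\<close> by (intro rev_image_eqI[of "(w, v, P)"]) auto
qed

lemma Qparam_diff_le:
  assumes "norm (\<phi> s a) \<le> 1"
  shows "\<bar>Qparam \<phi> M w v P s a - Qparam \<phi> M w' v' P' s a\<bar>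
           \<le> norm (w - w') + \<bar>v - v'\<bar> + sqrt (norm (P - P'))"
proof -
  define x where "x = \<phi> s a"
  have "\<bar>w \<bullet> x - w' \<bullet> x\<bar> \<le> norm (w - w') * norm x"
    by (metis Cauchy_Schwarz_ineq2 inner_diff_left)
  also have "\<dots> \<le> norm (w - w')" using assms by (simp add: x_def mult_left_le)
  finally have lin: "\<bar>w \<bullet> x - w' \<bullet> x\<bar> \<le> norm (w - w')" .
  have "x \<bullet> (P *v x) - x \<bullet> (P' *v x) = x \<bullet> ((P - P') *v x)"
    by (simp add: matrix_vector_mult_diff_rdistrib inner_diff_right)
  then have "\<bar>x \<bullet> (P *v x) - x \<bullet> (P' *v x)\<bar> \<le> norm x * norm ((P - P') *v x)"
    by (simp add: Cauchy_Schwarz_ineq2)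
  also have "\<dots> \<le> norm ((P - P') *v x)" using assms by (simp add: x_def mult_left_le_one_le)
  also have "\<dots> \<le> norm (P - P') * norm x" by (rule norm_matrix_vector_mult_le)
  also have "\<dots> \<le> norm (P - P')" using assms by (simp add: x_def mult_left_le)
  finally have "\<bar>max 0 (x \<bullet> (P *v x)) - max 0 (x \<bullet> (P' *v x))\<bar> \<le> norm (P - P')"
    by (intro abs_max_diff_le) auto
  then have quad: "\<bar>sqrt (max 0 (x \<bullet> (P *v x))) - sqrt (max 0 (x \<bullet> (P' *v x)))\<bar> \<le> sqrt (norm (P - P'))"
    by (intro order_trans[OF abs_sqrt_diff_le]) auto
  show ?thesis
    unfolding Qparam_def x_def[symmetric] using lin quad
    by (intro abs_min_diff_le) (auto simp: abs_le_iff)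
qed

section \<open>Covers of the classes\<close>

lemma Qclass_cover:
  fixes \<phi> :: "'s \<Rightarrow> 'b \<Rightarrow> real^'d"
  assumes \<phi>: "\<And>s a. a \<in> A \<Longrightarrow> norm (\<phi> s a) \<le> 1"
    and "0 \<le> L" and "0 \<le> D" and "0 < lam" and "0 < eps"
  obtains CQ where "finite CQ"
    and "real (card CQ) \<le> (1 + 8 * L / eps) ^ CARD('d) * (1 + 8 * D / eps)
           * (1 + 8 * sqrt (real CARD('d)) * B\<^sup>2 / (lam * eps\<^sup>2)) ^ (CARD('d)\<^sup>2)"
    and "\<forall>Q\<in>Qclass \<phi> L B D M lam. \<exists>g\<in>CQ. \<forall>s. \<forall>a\<in>A. \<bar>Q s a - g s a\<bar> \<le> eps"
proof -
  define R where "R = sqrt (real CARD('d)) * B\<^sup>2 / lam"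
  have "0 \<le> R" using \<open>0 < lam\<close> by (simp add: R_def)
  have "0 < eps / 4" and "0 < eps\<^sup>2 / 4" using \<open>0 < eps\<close> by simp_all
  obtain Cw :: "(real^'d) set" where "finite Cw"
    and card_Cw: "real (card Cw) \<le> (1 + 2 * L / (eps / 4)) ^ DIM(real^'d)"
    and net_w: "\<And>w. w \<in> cball 0 L \<Longrightarrow> \<exists>c\<in>Cw. dist w c \<le> eps / 4"
    using cball_finite_net[OF \<open>0 \<le> L\<close> \<open>0 < eps / 4\<close>] by blast
  obtain Cv :: "real set" where "finite Cv"
    and card_Cv: "real (card Cv) \<le> (1 + 2 * D / (eps / 4)) ^ DIM(real)"
    and net_v: "\<And>v. v \<in> cball 0 D \<Longrightarrow> \<exists>c\<in>Cv. dist v c \<le> eps / 4"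
    using cball_finite_net[OF \<open>0 \<le> D\<close> \<open>0 < eps / 4\<close>] by blast
  obtain CP :: "(real^'d^'d) set" where "finite CP"
    and card_CP: "real (card CP) \<le> (1 + 2 * R / (eps\<^sup>2 / 4)) ^ DIM(real^'d^'d)"
    and net_P: "\<And>P. P \<in> cball 0 R \<Longrightarrow> \<exists>c\<in>CP. dist P c \<le> eps\<^sup>2 / 4"
    using cball_finite_net[OF \<open>0 \<le> R\<close> \<open>0 < eps\<^sup>2 / 4\<close>] by blast
  have "(1 + 2 * R / (eps\<^sup>2 / 4)) ^ DIM(real^'d^'d)
      = (1 + 8 * sqrt (real CARD('d)) * B\<^sup>2 / (lam * eps\<^sup>2)) ^ (CARD('d)\<^sup>2)"
    by (simp add: R_def power2_eq_square mult.assoc)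
  moreover have "(1 + 2 * L / (eps / 4)) ^ DIM(real^'d) = (1 + 8 * L / eps) ^ CARD('d)"
    and "(1 + 2 * D / (eps / 4)) ^ DIM(real) = 1 + 8 * D / eps"
    by simp_all
  ultimately have card_nets: "real (card Cw) * real (card Cv) * real (card CP)
      \<le> (1 + 8 * L / eps) ^ CARD('d) * (1 + 8 * D / eps)
           * (1 + 8 * sqrt (real CARD('d)) * B\<^sup>2 / (lam * eps\<^sup>2)) ^ (CARD('d)\<^sup>2)"
    using card_Cw card_Cv card_CP by (intro mult_mono) auto
  define CQ where "CQ = (\<lambda>(w, v, P). Qparam \<phi> M w v P) ` (Cw \<times> Cv \<times> CP)"
  show ?thesis
  proof
    show "finite CQ" using \<open>finite Cw\<close> \<open>finite Cv\<close> \<open>finite CP\<close> by (simp add: CQ_def)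
    have "card CQ \<le> card (Cw \<times> Cv \<times> CP)"
      unfolding CQ_def using \<open>finite Cw\<close> \<open>finite Cv\<close> \<open>finite CP\<close> by (intro card_image_le) simp
    also have "\<dots> = card Cw * card Cv * card CP" by (simp add: card_cartesian_product)
    finally have "real (card CQ) \<le> real (card Cw) * real (card Cv) * real (card CP)"
      by (metis of_nat_le_iff of_nat_mult)
    with card_nets show "real (card CQ) \<le> (1 + 8 * L / eps) ^ CARD('d) * (1 + 8 * D / eps)
           * (1 + 8 * sqrt (real CARD('d)) * B\<^sup>2 / (lam * eps\<^sup>2)) ^ (CARD('d)\<^sup>2)"
      by linarith
  next
    show "\<forall>Q\<in>Qclass \<phi> L B D M lam. \<exists>g\<in>CQ. \<forall>s. \<forall>a\<in>A. \<bar>Q s a - g s a\<bar> \<le> eps"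
    proof
      fix Q assume "Q \<in> Qclass \<phi> L B D M lam"
      then have "Q \<in> (\<lambda>(w, v, P). Qparam \<phi> M w v P) ` (cball 0 L \<times> cball 0 D \<times> cball 0 R)"
        using Qclass_subset_Qparam[OF \<open>0 < lam\<close>] unfolding R_def by blast
      then obtain w v P where Q: "Q = Qparam \<phi> M w v P"
        and "w \<in> cball 0 L" "v \<in> cball 0 D" "P \<in> cball 0 R"
        by auto
      obtain w' where "w' \<in> Cw" "norm (w - w') \<le> eps / 4"
        using net_w[OF \<open>w \<in> cball 0 L\<close>] by (auto simp: dist_norm)
      obtain v' where "v' \<in> Cv" "\<bar>v - v'\<bar> \<le> eps / 4"
        using net_v[OF \<open>v \<in> cball 0 D\<close>] by (auto simp: dist_real_def)
      obtain P' where "P' \<in> CP" "norm (P - P') \<le> eps\<^sup>2 / 4"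
        using net_P[OF \<open>P \<in> cball 0 R\<close>] by (auto simp: dist_norm)
      have "\<bar>Q s a - Qparam \<phi> M w' v' P' s a\<bar> \<le> eps" if "a \<in> A" for s a
      proof -
        have "sqrt (norm (P - P')) \<le> sqrt (eps\<^sup>2 / 4)" by (rule real_sqrt_le_mono) fact
        also have "\<dots> = eps / 2" using \<open>0 < eps\<close> by (simp add: real_sqrt_divide)
        finally show ?thesis
          using Qparam_diff_le[of \<phi> s a M w v P w' v' P'] \<phi>[OF that] Q
            \<open>norm (w - w') \<le> eps / 4\<close> \<open>\<bar>v - v'\<bar> \<le> eps / 4\<close> by simp
      qed
      moreover have "Qparam \<phi> M w' v' P' \<in> CQ"
        using \<open>w' \<in> Cw\<close> \<open>v' \<in> Cv\<close> \<open>P' \<in> CP\<close> by (force simp: CQ_def)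
      ultimately show "\<exists>g\<in>CQ. \<forall>s. \<forall>a\<in>A. \<bar>Q s a - g s a\<bar> \<le> eps" by blast
    qed
  qed
qed

lemma Vclass_cover:
  fixes \<phi> :: "'s \<Rightarrow> 'b \<Rightarrow> real^'d" and CQ :: "('s \<Rightarrow> 'b \<Rightarrow> real) set"
  assumes "finite A" and "A \<noteq> {}" and "finite CQ"
    and cover: "\<forall>Q\<in>Qclass \<phi> L B D M lam. \<exists>g\<in>CQ. \<forall>s. \<forall>a\<in>A. \<bar>Q s a - g s a\<bar> \<le> eps"
  obtains C where "finite C" and "card C \<le> card CQ ^ 5"
    and "\<forall>f\<in>Vclass A \<phi> L B D M lam. \<exists>g\<in>C. \<forall>s. \<bar>f s - g s\<bar> \<le> eps"
proof
  define H :: "_ \<Rightarrow> 's \<Rightarrow> real" where "H = (\<lambda>(g1, g2, g3, g4, g5) s.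
      Max ((\<lambda>a. clip (g1 s a) (max (g2 s a) (g3 s a)) (min (g4 s a) (g5 s a))) ` A))"
  define C where "C = H ` (CQ \<times> CQ \<times> CQ \<times> CQ \<times> CQ)"
  show "finite C" using \<open>finite CQ\<close> by (simp add: C_def)
  have "card C \<le> card (CQ \<times> CQ \<times> CQ \<times> CQ \<times> CQ)"
    unfolding C_def using \<open>finite CQ\<close> by (intro card_image_le) simp
  then show "card C \<le> card CQ ^ 5" by (simp add: card_cartesian_product eval_nat_numeral)
  have "\<forall>Q\<in>Qclass \<phi> L B D M lam. \<exists>g. g \<in> CQ \<and> (\<forall>s. \<forall>a\<in>A. \<bar>Q s a - g s a\<bar> \<le> eps)"
    using cover by blast
  then obtain approx where approx: "\<And>Q. Q \<in> Qclass \<phi> L B D M lam \<Longrightarrow>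
      approx Q \<in> CQ \<and> (\<forall>s. \<forall>a\<in>A. \<bar>Q s a - approx Q s a\<bar> \<le> eps)"
    by (auto dest!: bchoice)
  show "\<forall>f\<in>Vclass A \<phi> L B D M lam. \<exists>g\<in>C. \<forall>s. \<bar>f s - g s\<bar> \<le> eps"
  proof
    fix f assume "f \<in> Vclass A \<phi> L B D M lam"
    then obtain Q1 Q2 Q3 Q4 Q5
      where f: "f = (\<lambda>s. Max ((\<lambda>a. clip (Q1 s a) (max (Q2 s a) (Q3 s a)) (min (Q4 s a) (Q5 s a))) ` A))"
        and Q: "Q1 \<in> Qclass \<phi> L B D M lam" "Q2 \<in> Qclass \<phi> L B D M lam" "Q3 \<in> Qclass \<phi> L B D M lam"
          "Q4 \<in> Qclass \<phi> L B D M lam" "Q5 \<in> Qclass \<phi> L B D M lam"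
      unfolding Vclass_def by blast
    define g where "g = H (approx Q1, approx Q2, approx Q3, approx Q4, approx Q5)"
    have "g \<in> C" unfolding g_def C_def by (intro imageI) (simp add: approx Q)
    moreover have "\<bar>f s - g s\<bar> \<le> eps" for s
      unfolding f g_def H_def prod.case
      by (intro abs_Max_image_diff_le \<open>finite A\<close> \<open>A \<noteq> {}\<close> abs_clip_diff_le
          abs_max_diff_le abs_min_diff_le) (simp_all add: approx Q)
    ultimately show "\<exists>g\<in>C. \<forall>s. \<bar>f s - g s\<bar> \<le> eps" by blast
  qed
qed

lemma covering_number_le_card:
  assumes "finite C" and cover: "\<forall>f\<in>F. \<exists>g\<in>C. \<forall>x. \<bar>f x - g x\<bar> \<le> eps"
  shows "covering_number eps F \<le> enat (card C)"
proof -
  have "\<exists>g\<in>C. (SUP x. \<bar>f x - g x\<bar>) \<le> eps \<and> bdd_above (range (\<lambda>x. \<bar>f x - g x\<bar>))"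
    if "f \<in> F" for f
  proof -
    obtain g where "g \<in> C" and g: "\<And>x. \<bar>f x - g x\<bar> \<le> eps" using cover \<open>f \<in> F\<close> by blast
    have "(SUP x. \<bar>f x - g x\<bar>) \<le> eps" using g by (intro cSUP_least) auto
    moreover have "bdd_above (range (\<lambda>x. \<bar>f x - g x\<bar>))" using g by (intro bdd_aboveI2)
    ultimately show ?thesis using \<open>g \<in> C\<close> by blast
  qed
  with \<open>finite C\<close> show ?thesis
    unfolding covering_number_def by (intro Inf_lower CollectI exI[of _ C]) simp
qed

lemma ln_covering_number_le:
  assumes "covering_number eps F \<le> enat n" and "real n \<le> K" and "1 \<le> K"
  shows "covering_number eps F \<noteq> \<infinity> \<and> ln (real (the_enat (covering_number eps F))) \<le> ln K"
proof -
  obtain m where m: "covering_number eps F = enat m" and "m \<le> n"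
    using assms(1) by (cases "covering_number eps F") auto
  have "ln (real m) \<le> ln K"
  proof (cases "m = 0")
    case False
    then show ?thesis using \<open>m \<le> n\<close> assms(2,3) by (subst ln_le_cancel_iff) auto
  qed (use assms(3) in simp)
  then show ?thesis using m by simp
qed

lemma ln_power_mult_power:
  fixes x y z :: real
  assumes "0 < x" and "0 < y" and "0 < z"
  shows "ln ((x ^ n * y * z ^ m) ^ k) = k * n * ln x + k * ln y + k * m * ln z"
  using assms by (simp add: ln_mult ln_realpow algebra_simps)

theorem lemma18:
  fixes A :: "'b set" and \<phi> :: "'s \<Rightarrow> 'b \<Rightarrow> real^'d"
    and L B D M lam eps :: real
  assumes "finite A" and "A \<noteq> {}"
    and "\<And>s a. a \<in> A \<Longrightarrow> norm (\<phi> s a) \<le> 1"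
    and "L > 0" "B > 0" "D > 0" "M > 0" "lam > 0"
    and "eps > 0"
  shows "covering_number eps (Vclass A \<phi> L B D M lam) \<noteq> \<infinity> \<and>
    ln (real (the_enat (covering_number eps (Vclass A \<phi> L B D M lam))))
      \<le> 5 * real CARD('d) * ln (1 + 8 * L / eps) + 5 * ln (1 + 8 * D / eps)
         + 5 * (real CARD('d))^2 * ln (1 + 8 * sqrt (real CARD('d)) * B^2 / (lam * eps^2))"
proof -
  define K where "K = (1 + 8 * L / eps) ^ CARD('d) * (1 + 8 * D / eps)
    * (1 + 8 * sqrt (real CARD('d)) * B\<^sup>2 / (lam * eps\<^sup>2)) ^ (CARD('d)\<^sup>2)"
  have factors: "1 \<le> 1 + 8 * L / eps" "1 \<le> 1 + 8 * D / eps"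
    "1 \<le> 1 + 8 * sqrt (real CARD('d)) * B\<^sup>2 / (lam * eps\<^sup>2)"
    using assms by simp_all
  obtain CQ where "finite CQ" and card_CQ: "real (card CQ) \<le> K"
    and cover_Q: "\<forall>Q\<in>Qclass \<phi> L B D M lam. \<exists>g\<in>CQ. \<forall>s. \<forall>a\<in>A. \<bar>Q s a - g s a\<bar> \<le> eps"
    using Qclass_cover[where A = A and \<phi> = \<phi> and B = B and M = M, OF assms(3)
        less_imp_le[OF \<open>L > 0\<close>] less_imp_le[OF \<open>D > 0\<close>] \<open>lam > 0\<close> \<open>eps > 0\<close>]
    unfolding K_def by blast
  obtain C where "finite C" and "card C \<le> card CQ ^ 5"
    and cover_V: "\<forall>f\<in>Vclass A \<phi> L B D M lam. \<exists>g\<in>C. \<forall>s. \<bar>f s - g s\<bar> \<le> eps"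
    using Vclass_cover[OF \<open>finite A\<close> \<open>A \<noteq> {}\<close> \<open>finite CQ\<close> cover_Q] by blast
  have "real (card C) \<le> real (card CQ) ^ 5"
    using \<open>card C \<le> card CQ ^ 5\<close> by (metis of_nat_le_iff of_nat_power)
  also have "\<dots> \<le> K ^ 5" using card_CQ by (intro power_mono) auto
  finally have "real (card C) \<le> K ^ 5" .
  moreover have "1 \<le> K ^ 5" unfolding K_def by (intro one_le_power mult_ge1_I factors)
  ultimately have "covering_number eps (Vclass A \<phi> L B D M lam) \<noteq> \<infinity> \<and>
      ln (real (the_enat (covering_number eps (Vclass A \<phi> L B D M lam)))) \<le> ln (K ^ 5)"
    by (rule ln_covering_number_le[OF covering_number_le_card[OF \<open>finite C\<close> cover_V]])
  moreover have "ln (K ^ 5) = 5 * real CARD('d) * ln (1 + 8 * L / eps) + 5 * ln (1 + 8 * D / eps)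
      + 5 * (real CARD('d))\<^sup>2 * ln (1 + 8 * sqrt (real CARD('d)) * B\<^sup>2 / (lam * eps\<^sup>2))"
    unfolding K_def using factors by (subst ln_power_mult_power) auto
  ultimately show ?thesis by simp
qed

end
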